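(* Let $(V,E)$ be a finite connected bipartite graph with sides $S_1,S_2$, every edge having weight $1$ (so $m(v)$ is the degree of $v$), and let $\mathbb{E}$ be a Banach space. Let $P_1,P_2,P_{1,2}$ be the operators on $\ell^2(E;\mathbb{E})$ defined below. Then $P_{1,2}P_i=P_iP_{1,2}=P_{1,2}$ for $i=1,2$, and $$\max\{\|P_1P_2-P_{1,2}\|,\|P_2P_1-P_{1,2}\|\}=\lambda^{\mathbb{E}}_{(V,E),\mathrm{bipartite}}.$$
   Context: $\ell^2(E;\mathbb{E})$ is the space of maps $\Phi:E\to\mathbb{E}$ with $\|\Phi\|^2=\sum_{e\in E}|\Phi(e)|^2$. For $i=1,2$ and an edge $\{v_1,v_2\}$ with $v_1\in S_1,v_2\in S_2$: $P_i\Phi(\{v_1,v_2\})=\frac1{m(v_i)}\sum_{\{v_i,u\}\in E}\Phi(\{v_i,u\})$; and $P_{1,2}\Phi\equiv\frac1{|E|}\sum_{e\in E}\Phi(e)$. $\ell^2(V,m;\mathbb{E})$ is the space of maps $\phi:V\to\mathbb{E}$ with $\|\phi\|^2=\sum_v m(v)|\phi(v)|^2$; the random walk is $(A\phi)(v)=\frac1{m(v)}\sum_{u:\{u,v\}\in E}\phi(u)$; $M_{\mathrm{sides}}\phi(u)=\frac1{m(S_i)}\sum_{w\in S_i}m(w)\phi(w)$ for $u\in S_i$, with $m(S_i)=\sum_{w\in S_i}m(w)$; and $\lambda^{\mathbb{E}}_{(V,E),\mathrm{bipartite}}$ is the operator norm of $A(I-M_{\mathrm{sides}})$ acting by these formulas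 on $\ell^2(V,m;\mathbb{E})$. *)

theory Defs
  imports "HOL-Analysis.Analysis"
begin

text \<open>Graphs: vertex set V :: 'v set, edges E :: 'v set set (two-element sets), unit weights.\<close>

definition deg :: "'v set set \<Rightarrow> 'v \<Rightarrow> real" where
  "deg E v = real (card {e\<in>E. v \<in> e})"

definition side_weight :: "'v set set \<Rightarrow> 'v set \<Rightarrow> real" where
  "side_weight E S = (\<Sum>w\<in>S. deg E w)"

definition connected_graph :: "'v set \<Rightarrow> 'v set set \<Rightarrow> bool" where
  "connected_graph V E \<longleftrightarrow>
     (\<forall>u\<in>V. \<forall>v\<in>V. (u, v) \<in> {(x, y). {x, y} \<in> E}\<^sup>*)"

definition bipartite_sides :: "'v set \<Rightarrow> 'v set set \<Rightarrow> 'v set \<Rightarrow> 'v set \<Rightarrow> bool" where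
  "bipartite_sides V E S1 S2 \<longleftrightarrow>
     S1 \<inter> S2 = {} \<and> S1 \<union> S2 = V \<and>
     (\<forall>e\<in>E. \<exists>v1\<in>S1. \<exists>v2\<in>S2. e = {v1, v2})"

definition wl2norm :: "'x set \<Rightarrow> ('x \<Rightarrow> real) \<Rightarrow> ('x \<Rightarrow> 'b::real_normed_vector) \<Rightarrow> real" where
  "wl2norm X w f = sqrt (\<Sum>x\<in>X. w x * (norm (f x))\<^sup>2)"

definition wl2opnorm :: "'x set \<Rightarrow> ('x \<Rightarrow> real)
    \<Rightarrow> (('x \<Rightarrow> 'b::real_normed_vector) \<Rightarrow> ('x \<Rightarrow> 'b)) \<Rightarrow> real" where
  "wl2opnorm X w T = (SUP f\<in>{f. wl2norm X w f \<le> 1}. wl2norm X w (T f))"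

definition endpt :: "'v set \<Rightarrow> 'v set \<Rightarrow> 'v" where
  "endpt S e = (THE v. v \<in> e \<and> v \<in> S)"

definition Pside :: "'v set set \<Rightarrow> 'v set \<Rightarrow> ('v set \<Rightarrow> 'b::real_normed_vector) \<Rightarrow> ('v set \<Rightarrow> 'b)" where
  "Pside E S \<Phi> = (\<lambda>e. (1 / deg E (endpt S e)) *\<^sub>R (\<Sum>e'\<in>{e'\<in>E. endpt S e \<in> e'}. \<Phi> e'))"

definition Pall :: "'v set set \<Rightarrow> ('v set \<Rightarrow> 'b::real_normed_vector) \<Rightarrow> ('v set \<Rightarrow> 'b)" where
  "Pall E \<Phi> = (\<lambda>e. (1 / real (card E)) *\<^sub>R (\<Sum>e'\<in>E. \<Phi> e'))"

definition Awalk :: "'v set \<Rightarrow> 'v set set \<Rightarrow> ('v \<Rightarrow> 'b::real_normed_vector) \<Rightarrow> ('v \<Rightarrow> 'b)" where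
  "Awalk V E \<phi> = (\<lambda>v. (1 / deg E v) *\<^sub>R (\<Sum>u\<in>{u\<in>V. {u, v} \<in> E}. \<phi> u))"

definition Msides :: "'v set set \<Rightarrow> 'v set \<Rightarrow> 'v set \<Rightarrow> ('v \<Rightarrow> 'b::real_normed_vector) \<Rightarrow> ('v \<Rightarrow> 'b)" where
  "Msides E S1 S2 \<phi> = (\<lambda>u.
     if u \<in> S1 then (1 / side_weight E S1) *\<^sub>R (\<Sum>w\<in>S1. deg E w *\<^sub>R \<phi> w)
     else if u \<in> S2 then (1 / side_weight E S2) *\<^sub>R (\<Sum>w\<in>S2. deg E w *\<^sub>R \<phi> w)
     else 0)"

definition lambda_bip :: "'b::real_normed_vector itself \<Rightarrow> 'v set \<Rightarrow> 'v set set \<Rightarrow> 'v set \<Rightarrow> 'v set \<Rightarrow> real" where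
  "lambda_bip _ V E S1 S2 =
     wl2opnorm V (deg E) (\<lambda>\<phi>::'v \<Rightarrow> 'b. Awalk V E (\<lambda>v. \<phi> v - Msides E S1 S2 \<phi> v))"

end

theory Submission
  imports Defs
begin

text \<open>Averaging \<open>\<Phi> \<in> \<ell>\<^sup>2(E)\<close> over the edges at each vertex of S2 gives a function on S2 of no
  larger norm, and \<open>(P1 P2 - P12) \<Phi>\<close> at an edge e is the value of \<open>A(I - M_sides)\<close> on that
  function at the S1-endpoint of e. Lifting a function on S1 to the edges through the
  S1-endpoint preserves the norm (the weight of a vertex is its degree), so \<open>\<parallel>P1 P2 - P12\<parallel>\<close>
  is the norm of \<open>A(I - M_sides)\<close> on functions supported on S2, and symmetrically
  \<open>\<parallel>P2 P1 - P12\<parallel>\<close> is its norm on functions supported on S1. As \<open>A(I - M_sides)\<close> maps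
  functions supported on one side to functions supported on the other, the images of the two
  halves of any function have disjoint supports, and its norm is the larger of the two.\<close>

lemma wl2norm_cong:
  "(\<And>x. x \<in> X \<Longrightarrow> f x = g x) \<Longrightarrow> wl2norm X w f = wl2norm X w g"
  unfolding wl2norm_def by (metis (no_types, lifting) sum.cong)

lemma wl2norm_nonneg: "(\<And>x. x \<in> X \<Longrightarrow> w x \<ge> 0) \<Longrightarrow> wl2norm X w f \<ge> 0"
  unfolding wl2norm_def by (simp add: sum_nonneg)

lemma wl2norm_power2:
  "(\<And>x. x \<in> X \<Longrightarrow> w x \<ge> 0) \<Longrightarrow> (wl2norm X w f)\<^sup>2 = (\<Sum>x\<in>X. w x * (norm (f x))\<^sup>2)"
  unfolding wl2norm_def by (simp add: sum_nonneg)

lemma wl2norm_scaleR: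
  assumes "\<And>x. x \<in> X \<Longrightarrow> w x \<ge> 0"
  shows "wl2norm X w (\<lambda>x. c *\<^sub>R f x) = \<bar>c\<bar> * wl2norm X w f"
proof -
  have "(\<Sum>x\<in>X. w x * (norm (c *\<^sub>R f x))\<^sup>2) = c\<^sup>2 * (\<Sum>x\<in>X. w x * (norm (f x))\<^sup>2)"
    by (simp add: sum_distrib_left power_mult_distrib algebra_simps)
  then show ?thesis unfolding wl2norm_def by (simp add: real_sqrt_mult)
qed

lemma norm_le_wl2norm:
  assumes "finite X" "x \<in> X"
  shows "norm (f x) \<le> wl2norm X (\<lambda>_. 1) f"
proof -
  have "(norm (f x))\<^sup>2 \<le> (\<Sum>y\<in>X. 1 * (norm (f y))\<^sup>2)"
    using member_le_sum[of x X "\<lambda>y. (norm (f y))\<^sup>2"] assms by simp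
  then show ?thesis unfolding wl2norm_def using real_le_rsqrt by blast
qed

lemma wl2norm_add_disjoint_supports:
  assumes "\<And>x. x \<in> X \<Longrightarrow> w x \<ge> 0" and "\<And>x. x \<in> X \<Longrightarrow> f x = 0 \<or> g x = 0"
  shows "(wl2norm X w (\<lambda>x. f x + g x))\<^sup>2 = (wl2norm X w f)\<^sup>2 + (wl2norm X w g)\<^sup>2"
proof -
  have "w x * (norm (f x + g x))\<^sup>2 = w x * (norm (f x))\<^sup>2 + w x * (norm (g x))\<^sup>2" if "x \<in> X" for x
    using assms(2)[OF that] by auto
  then show ?thesis
    by (simp add: wl2norm_power2[OF assms(1)] sum.distrib[symmetric])
qed

lemma wl2opnorm_le:
  assumes "\<And>f. wl2norm X w f \<le> 1 \<Longrightarrow> wl2norm X w (T f) \<le> C"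
  shows "wl2opnorm X w T \<le> C"
  unfolding wl2opnorm_def
proof (rule cSUP_least)
  have "(\<lambda>_. 0) \<in> {f. wl2norm X w f \<le> 1}" by (simp add: wl2norm_def)
  then show "{f. wl2norm X w f \<le> 1} \<noteq> {}" by blast
qed (use assms in simp)

lemma wl2norm_le_wl2opnorm:
  assumes "bdd_above ((\<lambda>f. wl2norm X w (T f)) ` {f. wl2norm X w f \<le> 1})"
    and "wl2norm X w f \<le> 1"
  shows "wl2norm X w (T f) \<le> wl2opnorm X w T"
  unfolding wl2opnorm_def by (rule cSUP_upper) (use assms in auto)

lemma wl2opnorm_nonneg:
  assumes "bdd_above ((\<lambda>f. wl2norm X w (T f)) ` {f. wl2norm X w f \<le> 1})"
    and "\<And>x. x \<in> X \<Longrightarrow> w x \<ge> 0"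
  shows "wl2opnorm X w T \<ge> 0"
proof -
  have "wl2norm X w (T (\<lambda>_. 0)) \<le> wl2opnorm X w T"
    by (rule wl2norm_le_wl2opnorm[OF assms(1)]) (simp add: wl2norm_def)
  moreover have "wl2norm X w (T (\<lambda>_. 0)) \<ge> 0" by (rule wl2norm_nonneg[OF assms(2)])
  ultimately show ?thesis by linarith
qed

lemma wl2norm_le_wl2opnorm_mult:
  assumes homogeneous: "\<And>c f x. x \<in> X \<Longrightarrow> T (\<lambda>y. c *\<^sub>R f y) x = c *\<^sub>R T f x"
    and nonneg: "\<And>x. x \<in> X \<Longrightarrow> w x \<ge> 0"
    and bdd: "bdd_above ((\<lambda>f. wl2norm X w (T f)) ` {f. wl2norm X w f \<le> 1})"
  shows "wl2norm X w (T f) \<le> wl2opnorm X w T * wl2norm X w f"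
proof -
  define n t N where "n = wl2norm X w f" and "t = wl2norm X w (T f)" and "N = wl2opnorm X w T"
  have scaled: "\<bar>c\<bar> * t \<le> N" if "\<bar>c\<bar> * n \<le> 1" for c
  proof -
    have "wl2norm X w (T (\<lambda>y. c *\<^sub>R f y)) = wl2norm X w (\<lambda>x. c *\<^sub>R T f x)"
      by (rule wl2norm_cong) (rule homogeneous)
    also have "\<dots> = \<bar>c\<bar> * t" unfolding t_def by (rule wl2norm_scaleR[OF nonneg])
    finally have "wl2norm X w (T (\<lambda>y. c *\<^sub>R f y)) = \<bar>c\<bar> * t" .
    moreover have "wl2norm X w (\<lambda>y. c *\<^sub>R f y) \<le> 1"
      using that unfolding n_def by (simp add: wl2norm_scaleR[OF nonneg])
    ultimately show ?thesis unfolding N_def using wl2norm_le_wl2opnorm[OF bdd] by fastforce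
  qed
  have "n \<ge> 0" "t \<ge> 0" unfolding n_def t_def by (simp_all add: wl2norm_nonneg nonneg)
  show ?thesis
  proof (cases "n = 0")
    case True
    have "t = 0"
    proof (rule ccontr)
      assume "t \<noteq> 0"
      \<comment> \<open>then all multiples of f lie in the unit ball, but their images are unbounded\<close>
      with \<open>t \<ge> 0\<close> have "\<bar>(\<bar>N\<bar> + 1) / t\<bar> * t = \<bar>N\<bar> + 1" by simp
      with scaled[of "(\<bar>N\<bar> + 1) / t"] True show False by simp
    qed
    with True show ?thesis unfolding n_def t_def by simp
  next
    case False
    with \<open>n \<ge> 0\<close> have "\<bar>1 / n\<bar> * t \<le> N" by (intro scaled) simp
    with False \<open>n \<ge> 0\<close> show ?thesis unfolding n_def t_def N_def by (simp add: field_simps)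
  qed
qed

lemma bdd_above_wl2opnorm_unit_weights:
  fixes T :: "('x \<Rightarrow> 'b::real_normed_vector) \<Rightarrow> 'x \<Rightarrow> 'b"
  assumes "finite X"
    and "\<And>f x. (\<And>y. y \<in> X \<Longrightarrow> norm (f y) \<le> 1) \<Longrightarrow> x \<in> X \<Longrightarrow> norm (T f x) \<le> C"
  shows "bdd_above ((\<lambda>f. wl2norm X (\<lambda>_. 1) (T f)) ` {f. wl2norm X (\<lambda>_. 1) f \<le> 1})"
proof (rule bdd_aboveI2)
  fix f :: "'x \<Rightarrow> 'b" assume "f \<in> {f. wl2norm X (\<lambda>_. 1) f \<le> 1}"
  then have "norm (f y) \<le> 1" if "y \<in> X" for y
    using norm_le_wl2norm[OF assms(1) that, of f] by simp
  then have "1 * (norm (T f x))\<^sup>2 \<le> C\<^sup>2" if "x \<in> X" for x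
    using assms(2) that by (simp add: power_mono)
  then have "(\<Sum>x\<in>X. 1 * (norm (T f x))\<^sup>2) \<le> real (card X) * C\<^sup>2"
    using sum_bounded_above[of X "\<lambda>x. 1 * (norm (T f x))\<^sup>2"] by simp
  then show "wl2norm X (\<lambda>_. 1) (T f) \<le> sqrt (real (card X) * C\<^sup>2)"
    unfolding wl2norm_def by (rule real_sqrt_le_mono)
qed

lemma norm_average_le:
  assumes "\<And>a. a \<in> A \<Longrightarrow> norm (x a) \<le> B" and "B \<ge> 0"
  shows "norm ((1 / real (card A)) *\<^sub>R (\<Sum>a\<in>A. x a)) \<le> B"
proof (cases "card A = 0")
  case False
  have "norm (\<Sum>a\<in>A. x a) \<le> real (card A) * B"
    using norm_sum[of x A] sum_bounded_above[of A "\<lambda>a. norm (x a)" B] assms(1) by simp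
  with False show ?thesis by (simp add: field_simps)
qed (use assms in simp)

lemma card_mult_norm_average_power2_le:
  "real (card A) * (norm ((1 / real (card A)) *\<^sub>R (\<Sum>a\<in>A. x a)))\<^sup>2 \<le> (\<Sum>a\<in>A. (norm (x a))\<^sup>2)"
proof (cases "card A = 0")
  case False
  have "(norm (\<Sum>a\<in>A. x a))\<^sup>2 \<le> (\<Sum>a\<in>A. norm (x a))\<^sup>2"
    by (simp add: norm_sum power_mono)
  also have "\<dots> \<le> (\<Sum>a\<in>A. (norm (x a))\<^sup>2) * real (card A)"
    by (rule sum_squared_le_sum_of_squares)
  finally show ?thesis using False by (simp add: power2_eq_square field_simps)
qed (simp add: sum_nonneg)

definition incident_edges :: "'v set set \<Rightarrow> 'v \<Rightarrow> 'v set set" where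
  "incident_edges E v = {e\<in>E. v \<in> e}"

definition vertex_average ::
    "'v set set \<Rightarrow> 'v set \<Rightarrow> ('v set \<Rightarrow> 'b::real_normed_vector) \<Rightarrow> 'v \<Rightarrow> 'b" where
  "vertex_average E S \<Phi> v =
     (if v \<in> S then (1 / deg E v) *\<^sub>R (\<Sum>e\<in>incident_edges E v. \<Phi> e) else 0)"

definition Awalk_centered :: "'v set \<Rightarrow> 'v set set \<Rightarrow> 'v set \<Rightarrow> 'v set
    \<Rightarrow> ('v \<Rightarrow> 'b::real_normed_vector) \<Rightarrow> 'v \<Rightarrow> 'b" where
  "Awalk_centered V E S1 S2 \<phi> = Awalk V E (\<lambda>v. \<phi> v - Msides E S1 S2 \<phi> v)"

definition Pside_Pside_minus_Pall :: "'v set set \<Rightarrow> 'v set \<Rightarrow> 'v set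
    \<Rightarrow> ('v set \<Rightarrow> 'b::real_normed_vector) \<Rightarrow> 'v set \<Rightarrow> 'b" where
  "Pside_Pside_minus_Pall E S1 S2 \<Phi> e = Pside E S1 (Pside E S2 \<Phi>) e - Pall E \<Phi> e"

lemma deg_eq_card_incident_edges: "deg E v = real (card (incident_edges E v))"
  unfolding deg_def incident_edges_def ..

lemma Pside_eq_incident_sum:
  "Pside E S \<Phi> e = (1 / deg E (endpt S e)) *\<^sub>R (\<Sum>e'\<in>incident_edges E (endpt S e). \<Phi> e')"
  unfolding Pside_def incident_edges_def ..

lemma Msides_add: "Msides E S1 S2 (\<lambda>v. \<phi> v + \<psi> v) u = Msides E S1 S2 \<phi> u + Msides E S1 S2 \<psi> u"
  unfolding Msides_def by (simp add: sum.distrib scaleR_add_right)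

lemma Awalk_add: "Awalk V E (\<lambda>v. \<phi> v + \<psi> v) u = Awalk V E \<phi> u + Awalk V E \<psi> u"
  unfolding Awalk_def by (simp add: sum.distrib scaleR_add_right)

lemma Awalk_centered_add:
  "Awalk_centered V E S1 S2 (\<lambda>v. \<phi> v + \<psi> v) u
     = Awalk_centered V E S1 S2 \<phi> u + Awalk_centered V E S1 S2 \<psi> u"
proof -
  have "(\<lambda>v. \<phi> v + \<psi> v - Msides E S1 S2 (\<lambda>v. \<phi> v + \<psi> v) v)
      = (\<lambda>v. (\<phi> v - Msides E S1 S2 \<phi> v) + (\<psi> v - Msides E S1 S2 \<psi> v))"
    by (simp add: Msides_add fun_eq_iff algebra_simps)
  then show ?thesis unfolding Awalk_centered_def by (simp add: Awalk_add)
qed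

lemma Pside_scaleR: "Pside E S (\<lambda>e. c *\<^sub>R \<Phi> e) e = c *\<^sub>R Pside E S \<Phi> e"
  unfolding Pside_def by (simp add: scaleR_sum_right[symmetric])

lemma Pall_scaleR: "Pall E (\<lambda>e. c *\<^sub>R \<Phi> e) e = c *\<^sub>R Pall E \<Phi> e"
  unfolding Pall_def by (simp add: scaleR_sum_right[symmetric])

lemma Pside_Pside_minus_Pall_scaleR:
  "Pside_Pside_minus_Pall E S1 S2 (\<lambda>e. c *\<^sub>R \<Phi> e) e = c *\<^sub>R Pside_Pside_minus_Pall E S1 S2 \<Phi> e"
proof -
  have "Pside E S2 (\<lambda>e. c *\<^sub>R \<Phi> e) = (\<lambda>e. c *\<^sub>R Pside E S2 \<Phi> e)"
    by (simp add: Pside_scaleR fun_eq_iff)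
  then show ?thesis
    by (simp add: Pside_Pside_minus_Pall_def Pside_scaleR Pall_scaleR scaleR_diff_right)
qed

lemma deg_nonneg: "deg E v \<ge> 0"
  by (simp add: deg_def)

lemma norm_Pside_le:
  assumes "\<And>e. e \<in> E \<Longrightarrow> norm (\<Phi> e) \<le> B" and "B \<ge> 0"
  shows "norm (Pside E S \<Phi> e) \<le> B"
  unfolding Pside_eq_incident_sum deg_eq_card_incident_edges
  by (rule norm_average_le) (use assms in \<open>auto simp: incident_edges_def\<close>)

lemma norm_Pall_le:
  assumes "\<And>e. e \<in> E \<Longrightarrow> norm (\<Phi> e) \<le> B" and "B \<ge> 0"
  shows "norm (Pall E \<Phi> e) \<le> B"
  unfolding Pall_def by (rule norm_average_le) (use assms in auto)

locale bipartite_graph =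
  fixes V :: "'v set" and E :: "'v set set" and S1 S2 :: "'v set"
  assumes finite_V: "finite V" and E_nonempty: "E \<noteq> {}" and edges_subset: "\<forall>e\<in>E. e \<subseteq> V"
    and bipartite: "bipartite_sides V E S1 S2" and connected: "connected_graph V E"
begin

lemma sides_disjoint: "S1 \<inter> S2 = {}"
  and V_eq_sides: "V = S1 \<union> S2"
  and edge_between_sides: "e \<in> E \<Longrightarrow> \<exists>v1\<in>S1. \<exists>v2\<in>S2. e = {v1, v2}"
  using bipartite unfolding bipartite_sides_def by auto

text \<open>The facts of this locale with the two sides exchanged are available under the prefix
  \<open>swap\<close> only from the next \<open>context\<close> block on.\<close>
sublocale swap: bipartite_graph V E S2 S1
proof
  show "bipartite_sides V E S2 S1"
    using bipartite unfolding bipartite_sides_def by (fastforce simp: insert_commute)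
qed (fact finite_V E_nonempty edges_subset connected)+

lemma finite_E: "finite E"
  using finite_V edges_subset by (meson Pow_iff finite_Pow_iff finite_subset subsetI)

lemma finite_S1: "finite S1"
  using finite_V V_eq_sides by simp

lemma endpt_pair:
  assumes "a \<in> S1" "b \<in> S2"
  shows "endpt S1 {a, b} = a" "endpt S2 {a, b} = b"
  unfolding endpt_def by (rule the_equality; use assms sides_disjoint in blast)+

lemma edge_endpts:
  assumes "e \<in> E"
  shows "endpt S1 e \<in> S1" "endpt S2 e \<in> S2" "e = {endpt S1 e, endpt S2 e}"
proof -
  obtain a b where "a \<in> S1" "b \<in> S2" "e = {a, b}"
    using edge_between_sides[OF assms] by blast
  then show "endpt S1 e \<in> S1" "endpt S2 e \<in> S2" "e = {endpt S1 e, endpt S2 e}"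
    using endpt_pair by simp_all
qed

lemma endpt_eq_iff:
  assumes "e \<in> E" "v \<in> S1"
  shows "endpt S1 e = v \<longleftrightarrow> v \<in> e"
proof -
  have "v \<noteq> endpt S2 e" using edge_endpts(2)[OF assms(1)] assms(2) sides_disjoint by blast
  moreover have "v \<in> e \<longleftrightarrow> v = endpt S1 e \<or> v = endpt S2 e"
    using edge_endpts(3)[OF assms(1)] by (metis empty_iff insert_iff)
  ultimately show ?thesis by blast
qed

lemma endpt_in_edge: "e \<in> E \<Longrightarrow> endpt S1 e \<in> e"
  using endpt_eq_iff edge_endpts(1) by blast

lemma endpt_incident_edge: "v \<in> S1 \<Longrightarrow> e \<in> incident_edges E v \<Longrightarrow> endpt S1 e = v"
  by (simp add: incident_edges_def endpt_eq_iff)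

lemma neighbour_in_other_side:
  assumes "{u, v} \<in> E" "v \<in> S1"
  shows "u \<in> S2"
proof -
  obtain a b where "a \<in> S1" "b \<in> S2" "{u, v} = {a, b}"
    using edge_between_sides[OF assms(1)] by blast
  with assms(2) sides_disjoint show ?thesis by (auto simp: doubleton_eq_iff)
qed

text \<open>Connectedness is used only here, to exclude isolated vertices.\<close>
lemma deg_pos:
  assumes "v \<in> V"
  shows "deg E v > 0"
proof -
  obtain e0 where e0: "e0 \<in> E" using E_nonempty by blast
  define a where "a = endpt S1 e0"
  have a: "a \<in> e0" "a \<in> V"
    using edge_endpts[OF e0] V_eq_sides unfolding a_def by auto
  have "(v, a) \<in> {(x, y). {x, y} \<in> E}\<^sup>*"
    using connected assms a unfolding connected_graph_def by blast
  then have "\<exists>e\<in>E. v \<in> e"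
  proof (cases rule: converse_rtranclE)
    case base
    then show ?thesis using e0 a by blast
  next
    case (step y)
    then show ?thesis by blast
  qed
  then have "incident_edges E v \<noteq> {}" by (auto simp: incident_edges_def)
  moreover have "finite (incident_edges E v)"
    using finite_E by (simp add: incident_edges_def)
  ultimately show ?thesis by (simp add: deg_eq_card_incident_edges card_gt_0_iff)
qed

lemma sum_edges_eq_sum_incident: "(\<Sum>e\<in>E. h e) = (\<Sum>v\<in>S1. \<Sum>e\<in>incident_edges E v. h e)"
proof -
  have "(\<Sum>e\<in>E. h e) = (\<Sum>v\<in>S1. \<Sum>e\<in>{e\<in>E. endpt S1 e = v}. h e)"
    by (rule sum.group[symmetric]) (use finite_E finite_S1 edge_endpts in auto)
  also have "\<dots> = (\<Sum>v\<in>S1. \<Sum>e\<in>incident_edges E v. h e)"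
    by (intro sum.cong refl) (auto simp: incident_edges_def endpt_eq_iff endpt_in_edge)
  finally show ?thesis .
qed

lemma side_weight_eq_card: "side_weight E S1 = real (card E)"
  using sum_edges_eq_sum_incident[of "\<lambda>_. 1::real"]
  by (simp add: side_weight_def deg_eq_card_incident_edges)

lemma Msides_swap: "Msides E S2 S1 = Msides E S1 S2"
  using sides_disjoint by (auto simp: Msides_def fun_eq_iff)

lemma Msides_on_S1:
  "u \<in> S1 \<Longrightarrow> Msides E S1 S2 \<phi> u = (1 / real (card E)) *\<^sub>R (\<Sum>w\<in>S1. deg E w *\<^sub>R \<phi> w)"
  by (simp add: Msides_def side_weight_eq_card)

lemma Awalk_on_S1:
  assumes "v \<in> S1"
  shows "Awalk V E \<phi> v = (1 / deg E v) *\<^sub>R (\<Sum>e\<in>incident_edges E v. \<phi> (endpt S2 e))"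
proof -
  have "(\<Sum>u\<in>{u\<in>V. {u, v} \<in> E}. \<phi> u) = (\<Sum>e\<in>incident_edges E v. \<phi> (endpt S2 e))"
  proof (rule sum.reindex_bij_witness[where j = "\<lambda>u. {u, v}" and i = "endpt S2"])
    fix e assume "e \<in> incident_edges E v"
    then have "e \<in> E" "v \<in> e" by (auto simp: incident_edges_def)
    then have "e = {endpt S2 e, v}"
      using edge_endpts endpt_eq_iff assms by (metis insert_commute)
    then show "{endpt S2 e, v} = e" "endpt S2 e \<in> {u\<in>V. {u, v} \<in> E}"
      using \<open>e \<in> E\<close> edges_subset by auto
  next
    fix u assume u: "u \<in> {u\<in>V. {u, v} \<in> E}"
    then have "u \<in> S2" using neighbour_in_other_side assms by blast
    then have "endpt S2 {u, v} = u"
      using endpt_pair(2)[OF assms] by (simp add: insert_commute)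
    then show "endpt S2 {u, v} = u" "\<phi> (endpt S2 {u, v}) = \<phi> u" by simp_all
    show "{u, v} \<in> incident_edges E v" using u by (simp add: incident_edges_def)
  qed
  then show ?thesis by (simp add: Awalk_def)
qed

lemma sum_deg_vertex_average: "(\<Sum>w\<in>S1. deg E w *\<^sub>R vertex_average E S1 \<Phi> w) = (\<Sum>e\<in>E. \<Phi> e)"
proof -
  have "deg E w *\<^sub>R vertex_average E S1 \<Phi> w = (\<Sum>e\<in>incident_edges E w. \<Phi> e)" if "w \<in> S1" for w
    using that deg_pos[of w] V_eq_sides by (simp add: vertex_average_def)
  then show ?thesis by (simp add: sum_edges_eq_sum_incident)
qed

lemma Msides_vertex_average: "u \<in> S1 \<Longrightarrow> Msides E S1 S2 (vertex_average E S1 \<Phi>) u = Pall E \<Phi> e"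
  by (simp add: Msides_on_S1 sum_deg_vertex_average Pall_def)

lemma Pside_eq_vertex_average: "e \<in> E \<Longrightarrow> Pside E S1 \<Phi> e = vertex_average E S1 \<Phi> (endpt S1 e)"
  using edge_endpts by (simp add: Pside_eq_incident_sum vertex_average_def)

lemma vertex_average_lift:
  assumes "v \<in> S1"
  shows "vertex_average E S1 (\<lambda>e. \<phi> (endpt S1 e)) v = \<phi> v"
proof -
  have "(\<Sum>e\<in>incident_edges E v. \<phi> (endpt S1 e)) = deg E v *\<^sub>R \<phi> v"
    using endpt_incident_edge[OF assms]
    by (simp add: deg_eq_card_incident_edges flip: sum_constant_scaleR)
  moreover have "deg E v > 0" using deg_pos assms V_eq_sides by blast
  ultimately show ?thesis using assms by (simp add: vertex_average_def)
qed

lemma wl2norm_lift: "wl2norm E (\<lambda>_. 1) (\<lambda>e. \<phi> (endpt S1 e)) = wl2norm S1 (deg E) \<phi>"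
proof -
  have "(\<Sum>e\<in>incident_edges E v. 1 * (norm (\<phi> (endpt S1 e)))\<^sup>2) = deg E v * (norm (\<phi> v))\<^sup>2"
    if "v \<in> S1" for v
    using endpt_incident_edge[OF that] by (simp add: deg_eq_card_incident_edges)
  then show ?thesis
    unfolding wl2norm_def sum_edges_eq_sum_incident by (metis (no_types, lifting) sum.cong)
qed

lemma wl2norm_restrict:
  "(\<And>v. v \<in> S2 \<Longrightarrow> \<phi> v = 0) \<Longrightarrow> wl2norm V (deg E) \<phi> = wl2norm S1 (deg E) \<phi>"
  unfolding wl2norm_def V_eq_sides using finite_V V_eq_sides sides_disjoint
  by (subst sum.union_disjoint) auto

lemma wl2norm_vertex_average_le: "wl2norm V (deg E) (vertex_average E S1 \<Phi>) \<le> wl2norm E (\<lambda>_. 1) \<Phi>"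
proof -
  have "deg E v * (norm (vertex_average E S1 \<Phi> v))\<^sup>2 \<le> (\<Sum>e\<in>incident_edges E v. (norm (\<Phi> e))\<^sup>2)"
    if "v \<in> S1" for v
    using that card_mult_norm_average_power2_le[of "incident_edges E v" \<Phi>]
    by (simp add: vertex_average_def deg_eq_card_incident_edges)
  then have "(\<Sum>v\<in>S1. deg E v * (norm (vertex_average E S1 \<Phi> v))\<^sup>2) \<le> (\<Sum>e\<in>E. 1 * (norm (\<Phi> e))\<^sup>2)"
    by (simp add: sum_edges_eq_sum_incident sum_mono)
  moreover have "wl2norm V (deg E) (vertex_average E S1 \<Phi>) = wl2norm S1 (deg E) (vertex_average E S1 \<Phi>)"
    by (rule wl2norm_restrict) (use sides_disjoint in \<open>auto simp: vertex_average_def\<close>)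
  ultimately show ?thesis unfolding wl2norm_def by (simp add: real_sqrt_le_mono)
qed

end

context bipartite_graph
begin

lemma sum_Pside: "(\<Sum>e\<in>E. Pside E S1 \<Phi> e) = (\<Sum>e\<in>E. \<Phi> e)"
proof -
  have "(\<Sum>e\<in>incident_edges E v. Pside E S1 \<Phi> e) = (\<Sum>e\<in>incident_edges E v. \<Phi> e)"
    if "v \<in> S1" for v
  proof -
    have "(\<Sum>e\<in>incident_edges E v. Pside E S1 \<Phi> e)
        = (\<Sum>e\<in>incident_edges E v. (1 / deg E v) *\<^sub>R (\<Sum>e'\<in>incident_edges E v. \<Phi> e'))"
      using endpt_incident_edge[OF that] by (simp add: Pside_eq_incident_sum)
    with that deg_pos[of v] V_eq_sides show ?thesis
      by (simp add: deg_eq_card_incident_edges sum_constant_scaleR)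
  qed
  then show ?thesis by (simp add: sum_edges_eq_sum_incident)
qed

lemma Pall_Pside: "Pall E (Pside E S1 \<Phi>) e = Pall E \<Phi> e"
  by (simp add: Pall_def sum_Pside)

lemma Pside_Pall:
  assumes "e \<in> E"
  shows "Pside E S1 (Pall E \<Phi>) e = Pall E \<Phi> e"
proof -
  have "deg E (endpt S1 e) > 0" using deg_pos edge_endpts(1)[OF assms] V_eq_sides by blast
  then show ?thesis
    by (simp add: Pside_eq_incident_sum Pall_def deg_eq_card_incident_edges sum_constant_scaleR)
qed

lemma Awalk_centered_swap: "Awalk_centered V E S2 S1 = Awalk_centered V E S1 S2"
  by (simp add: Awalk_centered_def Msides_swap fun_eq_iff)

lemma Awalk_centered_cong:
  assumes "\<And>v. v \<in> V \<Longrightarrow> \<phi> v = \<psi> v"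
  shows "Awalk_centered V E S1 S2 \<phi> = Awalk_centered V E S1 S2 \<psi>"
proof -
  have "Msides E S1 S2 \<phi> u = Msides E S1 S2 \<psi> u" for u
    using assms V_eq_sides by (simp add: Msides_def)
  with assms show ?thesis by (simp add: Awalk_centered_def Awalk_def)
qed

lemma Awalk_centered_vanishes_on_S2:
  assumes "\<And>u. u \<in> S1 \<Longrightarrow> \<phi> u = 0" and "v \<in> S2"
  shows "Awalk_centered V E S1 S2 \<phi> v = 0"
proof -
  have "\<phi> u - Msides E S1 S2 \<phi> u = 0" if "u \<in> S1" for u
    using assms(1) that by (simp add: Msides_on_S1)
  then show ?thesis
    unfolding Awalk_centered_def swap.Awalk_on_S1[OF assms(2)]
    using edge_endpts(1) by (simp add: incident_edges_def)
qed

lemma Pside_Pside_minus_Pall_eq: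
  assumes "e \<in> E"
  shows "Pside_Pside_minus_Pall E S1 S2 \<Phi> e
    = Awalk_centered V E S1 S2 (vertex_average E S2 \<Phi>) (endpt S1 e)"
proof -
  define v \<psi> where "v = endpt S1 e" and "\<psi> = vertex_average E S2 \<Phi>"
  have v: "v \<in> S1" "deg E v > 0"
    using edge_endpts(1)[OF assms] deg_pos V_eq_sides by (auto simp: v_def)
  have incident_E: "e' \<in> E" if "e' \<in> incident_edges E v" for e'
    using that by (simp add: incident_edges_def)
  have "(\<Sum>e'\<in>incident_edges E v. Pside E S2 \<Phi> e') = (\<Sum>e'\<in>incident_edges E v. \<psi> (endpt S2 e'))"
    by (rule sum.cong[OF refl]) (simp add: swap.Pside_eq_vertex_average incident_E \<psi>_def)
  then have PP: "Pside E S1 (Pside E S2 \<Phi>) e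
      = (1 / deg E v) *\<^sub>R (\<Sum>e'\<in>incident_edges E v. \<psi> (endpt S2 e'))"
    by (simp add: Pside_eq_incident_sum v_def)
  have mean: "Msides E S1 S2 \<psi> u = Pall E \<Phi> e" if "u \<in> S2" for u
    using swap.Msides_vertex_average[OF that] by (simp add: Msides_swap \<psi>_def)
  have "Awalk_centered V E S1 S2 \<psi> v
      = (1 / deg E v) *\<^sub>R (\<Sum>e'\<in>incident_edges E v. \<psi> (endpt S2 e') - Msides E S1 S2 \<psi> (endpt S2 e'))"
    by (simp add: Awalk_centered_def Awalk_on_S1[OF v(1)])
  also have "\<dots> = (1 / deg E v) *\<^sub>R (\<Sum>e'\<in>incident_edges E v. \<psi> (endpt S2 e') - Pall E \<Phi> e)"
    using mean edge_endpts(2) incident_E by simp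
  finally have "Awalk_centered V E S1 S2 \<psi> v
      = (1 / deg E v) *\<^sub>R (\<Sum>e'\<in>incident_edges E v. \<psi> (endpt S2 e') - Pall E \<Phi> e)" .
  with PP v show ?thesis
    by (simp add: Pside_Pside_minus_Pall_def sum_subtractf sum_constant_scaleR scaleR_diff_right
        deg_eq_card_incident_edges v_def \<psi>_def)
qed

lemma wl2norm_Pside_Pside_minus_Pall:
  "wl2norm E (\<lambda>_. 1) (Pside_Pside_minus_Pall E S1 S2 \<Phi>)
    = wl2norm V (deg E) (Awalk_centered V E S1 S2 (vertex_average E S2 \<Phi>))"
proof -
  have "wl2norm E (\<lambda>_. 1) (Pside_Pside_minus_Pall E S1 S2 \<Phi>)
      = wl2norm E (\<lambda>_. 1) (\<lambda>e. Awalk_centered V E S1 S2 (vertex_average E S2 \<Phi>) (endpt S1 e))"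
    by (rule wl2norm_cong) (rule Pside_Pside_minus_Pall_eq)
  also have "\<dots> = wl2norm S1 (deg E) (Awalk_centered V E S1 S2 (vertex_average E S2 \<Phi>))"
    by (rule wl2norm_lift)
  also have "\<dots> = wl2norm V (deg E) (Awalk_centered V E S1 S2 (vertex_average E S2 \<Phi>))"
    using sides_disjoint
    by (intro wl2norm_restrict[symmetric] Awalk_centered_vanishes_on_S2)
      (auto simp: vertex_average_def)
  finally show ?thesis .
qed

lemma bdd_above_Pside_Pside_minus_Pall:
  "bdd_above ((\<lambda>\<Phi>. wl2norm E (\<lambda>_. 1) (Pside_Pside_minus_Pall E S1 S2 \<Phi>))
     ` {\<Phi>. wl2norm E (\<lambda>_. 1) \<Phi> \<le> 1})"
proof (rule bdd_above_wl2opnorm_unit_weights[OF finite_E])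
  fix \<Phi> :: "'v set \<Rightarrow> 'b::real_normed_vector" and e
  assume "\<And>e. e \<in> E \<Longrightarrow> norm (\<Phi> e) \<le> 1"
  then have "norm (Pside E S1 (Pside E S2 \<Phi>) e) \<le> 1" "norm (Pall E \<Phi> e) \<le> 1"
    by (simp_all add: norm_Pside_le norm_Pall_le)
  then show "norm (Pside_Pside_minus_Pall E S1 S2 \<Phi> e) \<le> 2"
    unfolding Pside_Pside_minus_Pall_def by (smt (verit) norm_triangle_ineq4)
qed

lemma wl2opnorm_Pside_Pside_minus_Pall_nonneg: "wl2opnorm E (\<lambda>_. 1) (Pside_Pside_minus_Pall E S1 S2) \<ge> 0"
  by (rule wl2opnorm_nonneg[OF bdd_above_Pside_Pside_minus_Pall]) simp

lemma wl2norm_Awalk_centered_le_if_vanishes_on_S1: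
  fixes \<phi> :: "'v \<Rightarrow> 'b::real_normed_vector"
  assumes "\<And>v. v \<in> S1 \<Longrightarrow> \<phi> v = 0"
  shows "wl2norm V (deg E) (Awalk_centered V E S1 S2 \<phi>)
    \<le> wl2opnorm E (\<lambda>_. 1) (Pside_Pside_minus_Pall E S1 S2 :: ('v set \<Rightarrow> 'b) \<Rightarrow> _)
      * wl2norm V (deg E) \<phi>"
proof -
  define \<Phi> where "\<Phi> = (\<lambda>e. \<phi> (endpt S2 e))"
  have "Awalk_centered V E S1 S2 \<phi> = Awalk_centered V E S1 S2 (vertex_average E S2 \<Phi>)"
  proof (rule Awalk_centered_cong)
    fix v assume "v \<in> V"
    then consider "v \<in> S2" | "v \<in> S1" "v \<notin> S2" using V_eq_sides sides_disjoint by blast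
    then show "\<phi> v = vertex_average E S2 \<Phi> v"
    proof cases
      case 1
      then show ?thesis by (simp add: \<Phi>_def swap.vertex_average_lift)
    next
      case 2
      then show ?thesis by (simp add: assms vertex_average_def)
    qed
  qed
  then have "wl2norm V (deg E) (Awalk_centered V E S1 S2 \<phi>)
      = wl2norm E (\<lambda>_. 1) (Pside_Pside_minus_Pall E S1 S2 \<Phi>)"
    by (simp add: wl2norm_Pside_Pside_minus_Pall)
  also have "\<dots> \<le> wl2opnorm E (\<lambda>_. 1) (Pside_Pside_minus_Pall E S1 S2 :: ('v set \<Rightarrow> 'b) \<Rightarrow> _)
      * wl2norm E (\<lambda>_. 1) \<Phi>"
    by (rule wl2norm_le_wl2opnorm_mult)
      (simp_all add: Pside_Pside_minus_Pall_scaleR bdd_above_Pside_Pside_minus_Pall)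
  also have "wl2norm E (\<lambda>_. 1) \<Phi> = wl2norm V (deg E) \<phi>"
    using assms by (simp add: \<Phi>_def swap.wl2norm_lift swap.wl2norm_restrict)
  finally show ?thesis .
qed

lemma wl2opnorm_Pside_Pside_minus_Pall_le:
  assumes "bdd_above ((\<lambda>\<phi>. wl2norm V (deg E) (Awalk_centered V E S1 S2 \<phi>))
    ` {\<phi> :: 'v \<Rightarrow> 'b::real_normed_vector. wl2norm V (deg E) \<phi> \<le> 1})"
  shows "wl2opnorm E (\<lambda>_. 1) (Pside_Pside_minus_Pall E S1 S2 :: ('v set \<Rightarrow> 'b) \<Rightarrow> _)
    \<le> wl2opnorm V (deg E) (Awalk_centered V E S1 S2 :: ('v \<Rightarrow> 'b) \<Rightarrow> _)"
proof (rule wl2opnorm_le)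
  fix \<Phi> :: "'v set \<Rightarrow> 'b" assume "wl2norm E (\<lambda>_. 1) \<Phi> \<le> 1"
  then have "wl2norm V (deg E) (vertex_average E S2 \<Phi>) \<le> 1"
    using swap.wl2norm_vertex_average_le[of \<Phi>] by linarith
  then show "wl2norm E (\<lambda>_. 1) (Pside_Pside_minus_Pall E S1 S2 \<Phi>)
      \<le> wl2opnorm V (deg E) (Awalk_centered V E S1 S2 :: ('v \<Rightarrow> 'b) \<Rightarrow> _)"
    unfolding wl2norm_Pside_Pside_minus_Pall by (rule wl2norm_le_wl2opnorm[OF assms])
qed

end

context bipartite_graph
begin

lemma wl2norm_Awalk_centered_le:
  fixes \<phi> :: "'v \<Rightarrow> 'b::real_normed_vector"
  shows "wl2norm V (deg E) (Awalk_centered V E S1 S2 \<phi>)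
    \<le> max (wl2opnorm E (\<lambda>_. 1) (Pside_Pside_minus_Pall E S1 S2 :: ('v set \<Rightarrow> 'b) \<Rightarrow> _))
           (wl2opnorm E (\<lambda>_. 1) (Pside_Pside_minus_Pall E S2 S1 :: ('v set \<Rightarrow> 'b) \<Rightarrow> _))
      * wl2norm V (deg E) \<phi>"
    (is "?n (?T \<phi>) \<le> ?M * ?n \<phi>")
proof -
  define \<phi>1 \<phi>2 where "\<phi>1 = (\<lambda>v. if v \<in> S1 then \<phi> v else 0)" and "\<phi>2 = (\<lambda>v. if v \<in> S1 then 0 else \<phi> v)"
  have \<phi>1_vanishes: "\<phi>1 v = 0" if "v \<in> S2" for v
    using that sides_disjoint by (auto simp: \<phi>1_def)
  have \<phi>2_vanishes: "\<phi>2 v = 0" if "v \<in> S1" for v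
    using that by (simp add: \<phi>2_def)
  have \<phi>_split: "\<phi> = (\<lambda>v. \<phi>1 v + \<phi>2 v)" by (auto simp: \<phi>1_def \<phi>2_def)
  have n_nonneg: "?n \<psi> \<ge> 0" for \<psi> :: "'v \<Rightarrow> 'b"
    by (simp add: wl2norm_nonneg deg_nonneg)
  have "?M \<ge> 0"
    by (simp add: le_max_iff_disj wl2opnorm_Pside_Pside_minus_Pall_nonneg)
  have "?n (?T \<phi>1) \<le> ?M * ?n \<phi>1"
    using swap.wl2norm_Awalk_centered_le_if_vanishes_on_S1[OF \<phi>1_vanishes]
      mult_right_mono[OF max.cobounded2 n_nonneg]
    unfolding Awalk_centered_swap by (meson order_trans)
  moreover have "?n (?T \<phi>2) \<le> ?M * ?n \<phi>2"
    using wl2norm_Awalk_centered_le_if_vanishes_on_S1[OF \<phi>2_vanishes]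
      mult_right_mono[OF max.cobounded1 n_nonneg]
    by (meson order_trans)
  moreover have "?T \<phi> = (\<lambda>v. ?T \<phi>1 v + ?T \<phi>2 v)"
    by (subst \<phi>_split) (simp add: Awalk_centered_add fun_eq_iff)
  moreover have "?T \<phi>1 v = 0 \<or> ?T \<phi>2 v = 0" if "v \<in> V" for v
    using that V_eq_sides Awalk_centered_vanishes_on_S2[of \<phi>2, OF \<phi>2_vanishes]
      swap.Awalk_centered_vanishes_on_S2[of \<phi>1, OF \<phi>1_vanishes]
    unfolding Awalk_centered_swap by blast
  ultimately have "(?n (?T \<phi>))\<^sup>2 \<le> (?M * ?n \<phi>1)\<^sup>2 + (?M * ?n \<phi>2)\<^sup>2"
    using wl2norm_add_disjoint_supports[of V "deg E" "?T \<phi>1" "?T \<phi>2"] n_nonneg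
    by (simp add: deg_nonneg add_mono power_mono)
  also have "\<dots> = (?M * ?n \<phi>)\<^sup>2"
  proof -
    have "(?n \<phi>)\<^sup>2 = (?n \<phi>1)\<^sup>2 + (?n \<phi>2)\<^sup>2"
    proof (subst \<phi>_split, rule wl2norm_add_disjoint_supports)
      show "\<phi>1 v = 0 \<or> \<phi>2 v = 0" for v by (simp add: \<phi>1_def \<phi>2_def)
    qed (rule deg_nonneg)
    then show ?thesis by (simp add: power_mult_distrib distrib_left)
  qed
  finally show ?thesis
    by (rule power2_le_imp_le) (intro mult_nonneg_nonneg \<open>?M \<ge> 0\<close> n_nonneg)
qed

lemma max_wl2opnorm_Pside_Pside_minus_Pall:
  "max (wl2opnorm E (\<lambda>_. 1) (Pside_Pside_minus_Pall E S1 S2 :: ('v set \<Rightarrow> 'b::real_normed_vector) \<Rightarrow> _))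
       (wl2opnorm E (\<lambda>_. 1) (Pside_Pside_minus_Pall E S2 S1 :: ('v set \<Rightarrow> 'b) \<Rightarrow> _))
   = wl2opnorm V (deg E) (Awalk_centered V E S1 S2 :: ('v \<Rightarrow> 'b) \<Rightarrow> _)"
    (is "?M = wl2opnorm V (deg E) ?T")
proof -
  have bound: "wl2norm V (deg E) (?T \<phi>) \<le> ?M" if "wl2norm V (deg E) \<phi> \<le> 1" for \<phi>
  proof -
    have "?M \<ge> 0"
      by (simp add: le_max_iff_disj wl2opnorm_Pside_Pside_minus_Pall_nonneg)
    with that show ?thesis
      using wl2norm_Awalk_centered_le[of \<phi>] by (meson mult_left_le order_trans wl2norm_nonneg deg_nonneg)
  qed
  then have bdd: "bdd_above ((\<lambda>\<phi>. wl2norm V (deg E) (?T \<phi>)) ` {\<phi>. wl2norm V (deg E) \<phi> \<le> 1})"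
    by (intro bdd_aboveI2) simp
  have "wl2opnorm V (deg E) ?T \<le> ?M"
    by (rule wl2opnorm_le) (rule bound)
  moreover have "wl2opnorm E (\<lambda>_. 1) (Pside_Pside_minus_Pall E S1 S2 :: ('v set \<Rightarrow> 'b) \<Rightarrow> _)
      \<le> wl2opnorm V (deg E) ?T"
    by (rule wl2opnorm_Pside_Pside_minus_Pall_le[OF bdd])
  moreover have "wl2opnorm E (\<lambda>_. 1) (Pside_Pside_minus_Pall E S2 S1 :: ('v set \<Rightarrow> 'b) \<Rightarrow> _)
      \<le> wl2opnorm V (deg E) ?T"
    using swap.wl2opnorm_Pside_Pside_minus_Pall_le bdd unfolding Awalk_centered_swap by blast
  ultimately show ?thesis by linarith
qed

end

theorem proposition2p22:
  fixes V :: "'v set" and E :: "'v set set" and S1 S2 :: "'v set"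
  assumes "finite V"
    and "E \<noteq> {}"
    and "\<forall>e\<in>E. e \<subseteq> V"
    and "bipartite_sides V E S1 S2"
    and "connected_graph V E"
  shows "(\<forall>\<Phi>::'v set \<Rightarrow> 'b::banach. \<forall>e\<in>E.
            Pall E (Pside E S1 \<Phi>) e = Pall E \<Phi> e \<and> Pside E S1 (Pall E \<Phi>) e = Pall E \<Phi> e \<and>
            Pall E (Pside E S2 \<Phi>) e = Pall E \<Phi> e \<and> Pside E S2 (Pall E \<Phi>) e = Pall E \<Phi> e)
       \<and> max (wl2opnorm E (\<lambda>_. 1) (\<lambda>\<Phi>::'v set \<Rightarrow> 'b. \<lambda>e. Pside E S1 (Pside E S2 \<Phi>) e - Pall E \<Phi> e))
             (wl2opnorm E (\<lambda>_. 1) (\<lambda>\<Phi>::'v set \<Rightarrow> 'b. \<lambda>e. Pside E S2 (Pside E S1 \<Phi>) e - Pall E \<Phi> e))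
         = lambda_bip TYPE('b) V E S1 S2"
proof -
  interpret bipartite_graph V E S1 S2
    using assms by (simp add: bipartite_graph_def)
  show ?thesis
    using max_wl2opnorm_Pside_Pside_minus_Pall[where 'b = 'b]
    by (simp add: Pall_Pside Pside_Pall swap.Pall_Pside swap.Pside_Pall lambda_bip_def
        Awalk_centered_def[abs_def] Pside_Pside_minus_Pall_def[abs_def])
qed

end
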